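(* Let $r \ge 2$ be an integer, $\varepsilon \in (0,1)$, and let $\gamma, \eta > 0$ satisfy \[ \frac{(1+\eta)(1-\varepsilon)}{(1-r\gamma)^2} \le 1 - \frac{\varepsilon}{2} \qquad\text{and}\qquad (1+\gamma r)^{r-1} \le 1 + \frac{\varepsilon}{4}. \] Then for all choices of $\Pi = \Pi_n \in \mathcal{P}_{n,r}(\gamma)$, of an edge $e = e_n \in \Pi^c$, and of $m = m(n)$ with $n \le m \le (1-\varepsilon)m_r$, \[ \frac{m \cdot |\mathcal{G}_m(\Pi,e) \cap \mathcal{F}_{n,m}(K_{r+1})|}{\binom{e(\Pi)}{m-1}} \to \infty \quad \text{as } n \to \infty. \]
   Context: All graphs have vertex set $[n]$. $\mathcal{P}_{n,r}(\gamma)$ is the set of partitions $\{V_1,\dots,V_r\}$ of $[n]$ into $r$ parts with $(\frac1r-\gamma)n\le|V_i|\le(\frac1r+\gamma)n$ for all $i$. A partition $\Pi$ is identified with the complete $r$-partite graph with parts $V_1,\dots,V_r$; $e(\Pi)$ is its number of edges, and $\Pi^c$ is its complement (the union of the complete graphs on $V_1,\dots,V_r$). $\mathcal{G}_{m-1}(\Pi)$ is the set of subgraphs of $\Pi$ on $[n]$ with exactly $m-1$ edges, and for $e \in \Pi^c$, $\mathcal{G}_m(\Pi,e) = \{G + e : G \in \mathcal{G}_{m-1}(\Pi)\}$. $\mathcal{F}_{n,m}(K_{r+1})$ is the family of $K_{r+1}$-free graphs on $[n]$ with $m$ edges. $m_r = \theta_r n^{2-\frac{2}{r+2}}(\log n)^{1/(\binom{r+1}{2}-1)}$,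 $\theta_r = \frac{r-1}{2r}\left[ r\left(\frac{2r+2}{r+2}\right)^{\frac{1}{r-1}}\right]^{\frac{2}{r+2}}$, $\log$ natural. *)

theory Defs
  imports Complex_Main
begin

text \<open>Graphs on the vertex set [n] = {1..n} are represented by their edge sets;
an edge is a 2-element set of vertices.\<close>

definition all_edges :: "nat \<Rightarrow> nat set set" where
  "all_edges n = {{u, v} | u v. u \<in> {1..n} \<and> v \<in> {1..n} \<and> u \<noteq> v}"

definition in_Pnr :: "nat \<Rightarrow> nat \<Rightarrow> real \<Rightarrow> (nat \<Rightarrow> nat set) \<Rightarrow> bool" where
  "in_Pnr n r \<gamma> V \<longleftrightarrow>
     (\<Union>i<r. V i) = {1..n} \<and>
     (\<forall>i<r. \<forall>j<r. i \<noteq> j \<longrightarrow> V i \<inter> V j = {}) \<and>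
     (\<forall>i<r. (1 / real r - \<gamma>) * real n \<le> real (card (V i)) \<and>
             real (card (V i)) \<le> (1 / real r + \<gamma>) * real n)"

definition partite_graph :: "nat \<Rightarrow> nat \<Rightarrow> (nat \<Rightarrow> nat set) \<Rightarrow> nat set set" where
  "partite_graph n r V = {{u, v} | u v. u \<in> {1..n} \<and> v \<in> {1..n} \<and>
      (\<exists>i<r. \<exists>j<r. i \<noteq> j \<and> u \<in> V i \<and> v \<in> V j)}"

definition partite_compl :: "nat \<Rightarrow> nat \<Rightarrow> (nat \<Rightarrow> nat set) \<Rightarrow> nat set set" where
  "partite_compl n r V = {{u, v} | u v. u \<in> {1..n} \<and> v \<in> {1..n} \<and> u \<noteq> v \<and>
      (\<exists>i<r. u \<in> V i \<and> v \<in> V i)}"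

definition G_sub :: "nat \<Rightarrow> nat \<Rightarrow> (nat \<Rightarrow> nat set) \<Rightarrow> nat \<Rightarrow> nat set set set" where
  "G_sub n r V k = {G. G \<subseteq> partite_graph n r V \<and> card G = k}"

definition G_plus :: "nat \<Rightarrow> nat \<Rightarrow> (nat \<Rightarrow> nat set) \<Rightarrow> nat \<Rightarrow> nat set \<Rightarrow> nat set set set" where
  "G_plus n r V m e = (\<lambda>G. insert e G) ` G_sub n r V (m - 1)"

definition has_clique :: "nat \<Rightarrow> nat \<Rightarrow> nat set set \<Rightarrow> bool" where
  "has_clique n s H \<longleftrightarrow> (\<exists>S. S \<subseteq> {1..n} \<and> card S = s \<and>
       (\<forall>u\<in>S. \<forall>v\<in>S. u \<noteq> v \<longrightarrow> {u, v} \<in> H))"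

definition F_free :: "nat \<Rightarrow> nat \<Rightarrow> nat \<Rightarrow> nat set set set" where
  "F_free n m r = {H. H \<subseteq> all_edges n \<and> card H = m \<and> \<not> has_clique n (r + 1) H}"

definition theta :: "nat \<Rightarrow> real" where
  "theta r = (real r - 1) / (2 * real r) *
     (real r * ((2 * real r + 2) / (real r + 2)) powr (1 / (real r - 1))) powr (2 / (real r + 2))"

definition m_r :: "nat \<Rightarrow> nat \<Rightarrow> real" where
  "m_r r n = theta r * real n powr (2 - 2 / (real r + 2)) *
     ln (real n) powr (1 / (real ((r + 1) choose 2) - 1))"

end

theory Submission
  imports Defs "HOL-Library.FuncSet" "HOL-Real_Asymp.Real_Asymp"
begin

text \<open>Let \<open>e = uv\<close> lie inside the part \<open>V\<^sub>i\<close>. If \<open>G \<subseteq> \<Pi>\<close> and \<open>G + e\<close> contains a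
  \<open>K\<^sub>r\<^sub>+\<^sub>1\<close>, then \<open>G\<close> contains all \<open>s = (r+1 choose 2) - 1\<close> edges other than \<open>uv\<close> of a clique
  on \<open>u\<close>, \<open>v\<close> and a transversal of the other \<open>r - 1\<close> parts. Avoiding all these transversal
  cliques is a down-closed property, so its density among the \<open>(m-1)\<close>-edge subgraphs of \<open>\<Pi>\<close>
  is at least its probability in the binomial random subgraph \<open>\<Pi>\<^sub>p\<close>, \<open>p e(\<Pi>) = (1+\<eta>)(m-1)\<close>,
  minus the Chernoff bound for \<open>\<Pi>\<^sub>p\<close> having fewer than \<open>m - 1\<close> edges. By Harris' inequality
  that probability is at least \<open>(1 - p\<^sup>s)\<^sup>M\<close>, where \<open>M \<le> ((1/r + \<gamma>)n)\<^sup>r\<^sup>-\<^sup>1\<close> counts the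
  transversals, and \<open>\<theta>\<^sub>r\<close> is chosen so that \<open>M p\<^sup>s\<close> is at most \<open>(1 + \<epsilon>/4)(1 - \<epsilon>/2)\<^sup>s\<close>
  times \<open>(2r+2)/(r+2) log n\<close>. Hence the density is at least \<open>n\<^sup>-\<^sup>c\<close> for some
  \<open>c < (2r+2)/(r+2)\<close>, which \<open>m\<close> beats when \<open>m \<ge> m\<^sub>r / log n\<close>; for smaller \<open>m\<close> the
  bound on \<open>M p\<^sup>s\<close> tends to zero, so the density is bounded below and \<open>m \<ge> n\<close> suffices.\<close>

section \<open>Binomial random subsets and Harris' inequality\<close>

definition subset_prob :: "real \<Rightarrow> 'a set \<Rightarrow> ('a set \<Rightarrow> bool) \<Rightarrow> real" where
  "subset_prob p E A = (\<Sum>S | S \<subseteq> E \<and> A S. p ^ card S * (1 - p) ^ (card E - card S))"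

definition down_closed :: "('a set \<Rightarrow> bool) \<Rightarrow> bool" where
  "down_closed A \<longleftrightarrow> (\<forall>S T. A S \<longrightarrow> T \<subseteq> S \<longrightarrow> A T)"

lemma subset_prob_empty: "subset_prob p {} A = (if A {} then 1 else 0)"
  unfolding subset_prob_def by (cases "A {}") (auto simp: Collect_conv_if)

lemma subset_prob_insert:
  assumes "finite E" "x \<notin> E"
  shows "subset_prob p (insert x E) A
       = (1 - p) * subset_prob p E A + p * subset_prob p E (\<lambda>S. A (insert x S))"
proof -
  let ?X = "{S. S \<subseteq> E \<and> A S}" and ?Y = "{S. S \<subseteq> E \<and> A (insert x S)}"
  have split: "{S. S \<subseteq> insert x E \<and> A S} = ?X \<union> insert x ` ?Y"
  proof (rule set_eqI, rule iffI)
    fix S assume S: "S \<in> {S. S \<subseteq> insert x E \<and> A S}"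
    show "S \<in> ?X \<union> insert x ` ?Y"
    proof (cases "x \<in> S")
      case True
      then have "S - {x} \<in> ?Y" using S by (auto simp: insert_absorb)
      then show ?thesis using True by (auto intro: image_eqI[where x = "S - {x}"])
    qed (use S in auto)
  qed auto
  have fin: "finite ?X" "finite ?Y"
    using assms by (auto intro: finite_subset[of _ "Pow E"])
  have disj: "?X \<inter> insert x ` ?Y = {}" using assms by auto
  have inj: "inj_on (insert x) ?Y"
    using assms unfolding inj_on_def by (metis insert_ident mem_Collect_eq subsetD)
  have cE: "card (insert x E) = Suc (card E)" using assms by simp
  have s1: "(\<Sum>S\<in>?X. p ^ card S * (1 - p) ^ (card (insert x E) - card S))
      = (1 - p) * subset_prob p E A"
    unfolding subset_prob_def sum_distrib_left
  proof (rule sum.cong)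
    fix S assume "S \<in> ?X"
    then have "card S \<le> card E" using assms by (auto intro: card_mono)
    then show "p ^ card S * (1 - p) ^ (card (insert x E) - card S)
        = (1 - p) * (p ^ card S * (1 - p) ^ (card E - card S))"
      using cE by (simp add: Suc_diff_le)
  qed simp
  have s2: "(\<Sum>S \<in> insert x ` ?Y. p ^ card S * (1 - p) ^ (card (insert x E) - card S))
      = p * subset_prob p E (\<lambda>S. A (insert x S))"
    unfolding subset_prob_def sum_distrib_left sum.reindex[OF inj] o_def
  proof (rule sum.cong)
    fix S assume "S \<in> ?Y"
    then have "x \<notin> S" "finite S" using assms by (auto intro: finite_subset)
    then show "p ^ card (insert x S) * (1 - p) ^ (card (insert x E) - card (insert x S))
        = p * (p ^ card S * (1 - p) ^ (card E - card S))"
      using cE by simp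
  qed simp
  show ?thesis
    unfolding subset_prob_def[of p "insert x E"] split
      sum.union_disjoint[OF fin(1) finite_imageI[OF fin(2)] disj]
    using s1 s2 by simp
qed

lemma subset_prob_nonneg: "0 \<le> p \<Longrightarrow> p \<le> 1 \<Longrightarrow> 0 \<le> subset_prob p E A"
  unfolding subset_prob_def by (intro sum_nonneg) auto

lemma subset_prob_mono:
  assumes "0 \<le> p" "p \<le> 1" "finite E" "\<And>S. A S \<Longrightarrow> B S"
  shows "subset_prob p E A \<le> subset_prob p E B"
  unfolding subset_prob_def using assms
  by (intro sum_mono2) (auto intro: finite_subset[of _ "Pow E"])

lemma subset_prob_True: "finite E \<Longrightarrow> subset_prob p E (\<lambda>_. True) = 1"
  by (induction E rule: finite_induct) (simp_all add: subset_prob_empty subset_prob_insert)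

lemma subset_prob_superset:
  "finite E \<Longrightarrow> B \<subseteq> E \<Longrightarrow> subset_prob p E (\<lambda>S. B \<subseteq> S) = p ^ card B"
proof (induction E arbitrary: B rule: finite_induct)
  case empty then show ?case by (simp add: subset_prob_empty)
next
  case (insert x F)
  show ?case
  proof (cases "x \<in> B")
    case True
    then have B: "B - {x} \<subseteq> F" using insert by auto
    have "(\<lambda>S. B \<subseteq> insert x S) = (\<lambda>S. B - {x} \<subseteq> S)" by auto
    moreover have "{S. S \<subseteq> F \<and> B \<subseteq> S} = {}" using True insert.hyps by auto
    then have "subset_prob p F (\<lambda>S. B \<subseteq> S) = 0" unfolding subset_prob_def by (simp only:) simp
    moreover have "card B = Suc (card (B - {x}))"
      using True finite_subset[OF insert.prems] insert.hyps by (metis card_Suc_Diff1 finite_insert)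
    ultimately show ?thesis using insert.IH[OF B] insert.hyps by (simp add: subset_prob_insert)
  next
    case False
    then have "B \<subseteq> F" "(\<lambda>S. B \<subseteq> insert x S) = (\<lambda>S. B \<subseteq> S)" using insert by auto
    then show ?thesis using insert.IH insert.hyps by (simp add: subset_prob_insert algebra_simps)
  qed
qed

lemma subset_prob_Not:
  assumes "finite E"
  shows "subset_prob p E (\<lambda>S. \<not> A S) = 1 - subset_prob p E A"
proof -
  have "{S. S \<subseteq> E \<and> \<not> A S} = {S. S \<subseteq> E} - {S. S \<subseteq> E \<and> A S}" by auto
  then have "subset_prob p E (\<lambda>S. \<not> A S) = subset_prob p E (\<lambda>_. True) - subset_prob p E A"
    unfolding subset_prob_def using assms by (simp only: simp_thms) (rule sum_diff, auto)
  then show ?thesis using subset_prob_True[OF assms] by simp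
qed

lemma harris_inequality:
  assumes "finite E" "0 \<le> p" "p \<le> 1" "down_closed A" "down_closed B"
  shows "subset_prob p E A * subset_prob p E B \<le> subset_prob p E (\<lambda>S. A S \<and> B S)"
  using assms(1,4,5)
proof (induction E arbitrary: A B rule: finite_induct)
  case empty then show ?case by (simp add: subset_prob_empty)
next
  case (insert x F)
  let ?A1 = "\<lambda>S. A (insert x S)" and ?B1 = "\<lambda>S. B (insert x S)"
  have "down_closed ?A1" "down_closed ?B1"
    using insert.prems unfolding down_closed_def by (meson insert_mono)+
  then have IH1: "subset_prob p F ?A1 * subset_prob p F ?B1 \<le> subset_prob p F (\<lambda>S. ?A1 S \<and> ?B1 S)"
    using insert.IH by blast
  have IH0: "subset_prob p F A * subset_prob p F B \<le> subset_prob p F (\<lambda>S. A S \<and> B S)"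
    using insert.IH insert.prems by blast
  define a0 where "a0 = subset_prob p F A"
  define a1 where "a1 = subset_prob p F ?A1"
  define b0 where "b0 = subset_prob p F B"
  define b1 where "b1 = subset_prob p F ?B1"
  have "a1 \<le> a0" "b1 \<le> b0"
    unfolding a0_def a1_def b0_def b1_def using insert assms
    by (auto intro!: subset_prob_mono simp: down_closed_def)
  \<comment> \<open>Chebyshev's sum inequality over the two values of the indicator of \<open>x\<close>\<close>
  then have "0 \<le> p * (1 - p) * ((a0 - a1) * (b0 - b1))"
    using assms by (intro mult_nonneg_nonneg) auto
  then have "((1 - p) * a0 + p * a1) * ((1 - p) * b0 + p * b1) \<le> (1 - p) * (a0 * b0) + p * (a1 * b1)"
    by (simp add: algebra_simps)
  also have "\<dots> \<le> (1 - p) * subset_prob p F (\<lambda>S. A S \<and> B S) + p * subset_prob p F (\<lambda>S. ?A1 S \<and> ?B1 S)"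
    using IH0 IH1 assms unfolding a0_def a1_def b0_def b1_def
    by (intro add_mono mult_left_mono) auto
  finally show ?case using insert.hyps
    by (simp add: subset_prob_insert a0_def a1_def b0_def b1_def)
qed

lemma harris_inequality_prod:
  assumes "finite E" "0 \<le> p" "p \<le> 1" "finite I" "\<And>i. i \<in> I \<Longrightarrow> down_closed (A i)"
  shows "(\<Prod>i\<in>I. subset_prob p E (A i)) \<le> subset_prob p E (\<lambda>S. \<forall>i\<in>I. A i S)"
  using assms(4,5)
proof (induction I rule: finite_induct)
  case empty then show ?case using subset_prob_True[OF assms(1)] by simp
next
  case (insert j I)
  have "down_closed (\<lambda>S. \<forall>i\<in>I. A i S)"
    using insert.prems unfolding down_closed_def by blast
  then have "subset_prob p E (A j) * subset_prob p E (\<lambda>S. \<forall>i\<in>I. A i S)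
      \<le> subset_prob p E (\<lambda>S. \<forall>i\<in>insert j I. A i S)"
    using harris_inequality[OF assms(1-3)] insert.prems by simp
  moreover have "subset_prob p E (A j) * (\<Prod>i\<in>I. subset_prob p E (A i))
      \<le> subset_prob p E (A j) * subset_prob p E (\<lambda>S. \<forall>i\<in>I. A i S)"
    using insert subset_prob_nonneg assms by (intro mult_left_mono) auto
  ultimately show ?case using insert.hyps by simp
qed

section \<open>Slices of down-closed families and the binomial lower tail\<close>

definition slice_count :: "'a set \<Rightarrow> ('a set \<Rightarrow> bool) \<Rightarrow> nat \<Rightarrow> nat" where
  "slice_count E A k = card {S. S \<subseteq> E \<and> card S = k \<and> A S}"

definition slice_density :: "'a set \<Rightarrow> ('a set \<Rightarrow> bool) \<Rightarrow> nat \<Rightarrow> real" where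
  "slice_density E A k = real (slice_count E A k) / real (card E choose k)"

lemma slice_count_le: "finite E \<Longrightarrow> slice_count E A k \<le> card E choose k"
proof -
  assume E: "finite E"
  have "finite {S. S \<subseteq> E \<and> card S = k}"
    by (rule finite_subset[of _ "Pow E"]) (use E in auto)
  then have "slice_count E A k \<le> card {S. S \<subseteq> E \<and> card S = k}"
    unfolding slice_count_def by (rule card_mono) auto
  then show ?thesis using n_subsets[OF E, of k] by simp
qed

lemma slice_density_le_1: "finite E \<Longrightarrow> slice_density E A k \<le> 1"
  unfolding slice_density_def using slice_count_le[of E A k]
  by (cases "card E choose k = 0") (simp_all add: divide_le_eq_1)

text \<open>Double counting of the pairs \<open>T \<subset> S\<close> with \<open>A S\<close>, \<open>card S = k + 1\<close> and \<open>card T = k\<close>.\<close>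

lemma slice_count_Suc_le:
  assumes "finite E" "down_closed A"
  shows "slice_count E A (Suc k) * Suc k \<le> slice_count E A k * (card E - k)"
proof -
  let ?SS = "{S. S \<subseteq> E \<and> card S = Suc k \<and> A S}"
  let ?TT = "{T. T \<subseteq> E \<and> card T = k \<and> A T}"
  define D where "D = (SIGMA S:?SS. {T. T \<subseteq> S \<and> card T = k})"
  have fin: "finite ?SS" "finite ?TT" using assms(1) by (auto intro: finite_subset[of _ "Pow E"])
  have "card D = (\<Sum>S\<in>?SS. card {T. T \<subseteq> S \<and> card T = k})"
    unfolding D_def using fin assms(1)
    by (intro card_SigmaI) (auto intro: finite_subset[of _ "Pow E"])
  also have "\<dots> = (\<Sum>S\<in>?SS. Suc k)"
  proof (rule sum.cong)
    fix S assume "S \<in> ?SS"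
    then have "finite S" "card S = Suc k" using assms(1) finite_subset by auto
    then show "card {T. T \<subseteq> S \<and> card T = k} = Suc k" using n_subsets[of S k] by simp
  qed simp
  finally have cD: "card D = slice_count E A (Suc k) * Suc k" unfolding slice_count_def by simp
  have sub: "D \<subseteq> (\<lambda>(T, y). (insert y T, T)) ` (SIGMA T:?TT. E - T)"
  proof
    fix z assume "z \<in> D"
    then obtain S T where z: "z = (S, T)" "S \<subseteq> E" "card S = Suc k" "A S" "T \<subseteq> S" "card T = k"
      unfolding D_def by auto
    have "finite S" using z assms(1) finite_subset by auto
    then have "card (S - T) = 1" using z by (simp add: card_Diff_subset finite_subset)
    then obtain y where y: "S - T = {y}" by (meson card_1_singletonE)
    have "T \<in> ?TT" using z assms(2) unfolding down_closed_def by auto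
    moreover have "S = insert y T" "y \<in> E - T" using y z by auto
    ultimately show "z \<in> (\<lambda>(T, y). (insert y T, T)) ` (SIGMA T:?TT. E - T)"
      using z by (auto intro!: image_eqI[where x = "(T, y)"])
  qed
  have finSig: "finite (SIGMA T:?TT. E - T)" using fin assms(1) by auto
  have "card D \<le> card ((\<lambda>(T, y). (insert y T, T)) ` (SIGMA T:?TT. E - T))"
    by (rule card_mono[OF finite_imageI[OF finSig] sub])
  also have "\<dots> \<le> card (SIGMA T:?TT. E - T)" by (rule card_image_le[OF finSig])
  also have "\<dots> = (\<Sum>T\<in>?TT. card (E - T))" using fin assms(1) by (intro card_SigmaI) auto
  also have "\<dots> = (\<Sum>T\<in>?TT. card E - k)"
    using assms(1) by (intro sum.cong) (auto simp: card_Diff_subset finite_subset)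
  also have "\<dots> = slice_count E A k * (card E - k)" unfolding slice_count_def by simp
  finally show ?thesis using cD by simp
qed

lemma slice_density_Suc_le:
  assumes "finite E" "down_closed A"
  shows "slice_density E A (Suc k) \<le> slice_density E A k"
proof (cases "k < card E")
  case False
  then have "card E choose Suc k = 0" by simp
  then show ?thesis unfolding slice_density_def by (simp only:) simp
next
  case True
  define N where "N = card E"
  define c0 where "c0 = real (slice_count E A k)"
  define c1 where "c1 = real (slice_count E A (Suc k))"
  define b0 where "b0 = real (N choose k)"
  define b1 where "b1 = real (N choose Suc k)"
  have pos: "0 < b0" "0 < b1" "0 < real (N - k)" using True unfolding N_def b0_def b1_def by auto
  have "(N choose Suc k) * Suc k = (N choose k) * (N - k)"
    using binomial_absorption[of k N] binomial_absorb_comp[of N k] by (simp add: ac_simps)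
  then have b: "b1 * Suc k = b0 * (N - k)"
    unfolding b0_def b1_def by (simp only: of_nat_mult[symmetric] of_nat_eq_iff)
  have "slice_count E A (Suc k) * Suc k \<le> slice_count E A k * (N - k)"
    using slice_count_Suc_le[OF assms, of k] unfolding N_def .
  then have c: "c1 * Suc k \<le> c0 * (N - k)"
    unfolding c0_def c1_def by (simp only: of_nat_mult[symmetric] of_nat_le_iff)
  have "c1 * b0 * (N - k) = (c1 * Suc k) * b1" using b by (simp add: ac_simps)
  also have "\<dots> \<le> (c0 * (N - k)) * b1" using c pos by (intro mult_right_mono) auto
  finally have "c1 * b0 * (N - k) \<le> c0 * b1 * (N - k)" by (simp add: ac_simps)
  then have "c1 * b0 \<le> c0 * b1" using pos by simp
  then show ?thesis using pos unfolding slice_density_def c0_def c1_def b0_def b1_def N_def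
    by (simp add: divide_simps)
qed

lemma slice_density_antimono:
  "finite E \<Longrightarrow> down_closed A \<Longrightarrow> j \<le> k \<Longrightarrow> slice_density E A k \<le> slice_density E A j"
proof -
  assume "finite E" "down_closed A" "j \<le> k"
  then have "decseq (slice_density E A)" by (intro decseq_SucI slice_density_Suc_le)
  then show ?thesis using \<open>j \<le> k\<close> by (simp add: decseqD)
qed

definition binomial_lower_tail :: "nat \<Rightarrow> real \<Rightarrow> nat \<Rightarrow> real" where
  "binomial_lower_tail N p q = (\<Sum>k<q. real (N choose k) * (p ^ k * (1 - p) ^ (N - k)))"

lemma subset_prob_eq_sum_slice_count:
  assumes "finite E"
  shows "subset_prob p E A = (\<Sum>k\<le>card E. real (slice_count E A k) * (p ^ k * (1 - p) ^ (card E - k)))"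
proof -
  have fin: "finite {S. S \<subseteq> E \<and> A S}" using assms by (auto intro: finite_subset[of _ "Pow E"])
  have im: "card ` {S. S \<subseteq> E \<and> A S} \<subseteq> {..card E}" using assms by (auto intro: card_mono)
  have "subset_prob p E A = (\<Sum>k\<le>card E. \<Sum>S\<in>{S \<in> {S. S \<subseteq> E \<and> A S}. card S = k}.
      p ^ card S * (1 - p) ^ (card E - card S))"
    unfolding subset_prob_def by (rule sum.group[symmetric, OF fin _ im]) simp
  also have "\<dots> = (\<Sum>k\<le>card E. real (slice_count E A k) * (p ^ k * (1 - p) ^ (card E - k)))"
  proof (rule sum.cong)
    fix k
    have "{S \<in> {S. S \<subseteq> E \<and> A S}. card S = k} = {S. S \<subseteq> E \<and> card S = k \<and> A S}" by auto
    then show "(\<Sum>S\<in>{S \<in> {S. S \<subseteq> E \<and> A S}. card S = k}. p ^ card S * (1 - p) ^ (card E - card S))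
        = real (slice_count E A k) * (p ^ k * (1 - p) ^ (card E - k))"
      unfolding slice_count_def by simp
  qed simp
  finally show ?thesis .
qed

lemma subset_prob_le_tail_plus_slice_density:
  assumes "finite E" "down_closed A" "q \<le> card E" "0 \<le> p" "p \<le> 1"
  shows "subset_prob p E A \<le> binomial_lower_tail (card E) p q + slice_density E A q"
proof -
  define N where "N = card E"
  define w where "w k = real (N choose k) * (p ^ k * (1 - p) ^ (N - k))" for k
  have w: "0 \<le> w k" for k unfolding w_def using assms by simp
  have "(\<Sum>k\<in>{q..N}. w k) \<le> (\<Sum>k\<le>N. w k)" by (rule sum_mono2) (auto simp: w)
  also have "\<dots> = 1" using binomial_ring[of p "1 - p" N] by (simp add: w_def mult.assoc)
  finally have tail_le_1: "(\<Sum>k\<in>{q..N}. w k) \<le> 1" .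
  have "subset_prob p E A = (\<Sum>k\<le>N. w k * slice_density E A k)"
    unfolding subset_prob_eq_sum_slice_count[OF assms(1)] N_def[symmetric]
    by (rule sum.cong) (auto simp: w_def slice_density_def N_def)
  also have "\<dots> = (\<Sum>k<q. w k * slice_density E A k) + (\<Sum>k\<in>{q..N}. w k * slice_density E A k)"
  proof -
    have "{..N} = {..<q} \<union> {q..N}" using assms(3) N_def by auto
    then show ?thesis by (simp add: sum.union_disjoint ivl_disj_int)
  qed
  also have "\<dots> \<le> (\<Sum>k<q. w k) + (\<Sum>k\<in>{q..N}. w k) * slice_density E A q"
    unfolding sum_distrib_right
    using w slice_density_le_1[OF assms(1)] slice_density_antimono[OF assms(1,2)]
    by (intro add_mono sum_mono) (auto intro: mult_left_le mult_left_mono)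
  also have "\<dots> \<le> (\<Sum>k<q. w k) + slice_density E A q"
    using tail_le_1 by (intro add_left_mono mult_left_le_one_le) (simp_all add: sum_nonneg w slice_density_def)
  finally show ?thesis unfolding binomial_lower_tail_def w_def N_def by simp
qed

lemma binomial_lower_tail_le:
  assumes "0 \<le> p" "p \<le> 1" "0 < x" "x \<le> 1"
  shows "binomial_lower_tail N p q \<le> (p * x + (1 - p)) ^ N / x ^ q"
proof -
  define w where "w k = real (N choose k) * ((p * x) ^ k * (1 - p) ^ (N - k))" for k
  have "binomial_lower_tail N p q \<le> (\<Sum>k<q. w k / x ^ q)"
    unfolding binomial_lower_tail_def
  proof (rule sum_mono)
    fix k assume "k \<in> {..<q}"
    then have "x ^ q \<le> x ^ k" using assms by (intro power_decreasing) auto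
    then have "p ^ k * (1 - p) ^ (N - k) * x ^ q \<le> p ^ k * (1 - p) ^ (N - k) * x ^ k"
      using assms by (intro mult_left_mono) auto
    also have "\<dots> = (p * x) ^ k * (1 - p) ^ (N - k)" by (simp add: power_mult_distrib)
    finally have "p ^ k * (1 - p) ^ (N - k) * x ^ q \<le> (p * x) ^ k * (1 - p) ^ (N - k)" .
    then have "p ^ k * (1 - p) ^ (N - k) \<le> (p * x) ^ k * (1 - p) ^ (N - k) / x ^ q"
      using assms by (simp add: pos_le_divide_eq)
    then show "real (N choose k) * (p ^ k * (1 - p) ^ (N - k)) \<le> w k / x ^ q"
      unfolding w_def by (simp add: mult_left_mono times_divide_eq_right[symmetric] del: times_divide_eq_right)
  qed
  also have "\<dots> \<le> (\<Sum>k\<le>N. w k) / x ^ q"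
  proof -
    have "(\<Sum>k<q. w k) = (\<Sum>k\<in>{..<q} \<inter> {..N}. w k)"
      by (rule sum.mono_neutral_right) (auto simp: w_def)
    also have "\<dots> \<le> (\<Sum>k\<le>N. w k)" by (rule sum_mono2) (use assms in \<open>auto simp: w_def\<close>)
    finally show ?thesis using assms by (simp add: sum_divide_distrib[symmetric] divide_right_mono)
  qed
  also have "(\<Sum>k\<le>N. w k) = (p * x + (1 - p)) ^ N"
    using binomial_ring[of "p * x" "1 - p" N] by (simp add: w_def mult.assoc)
  finally show ?thesis .
qed

lemma binomial_lower_tail_le_exp:
  assumes "\<eta> > 0" "0 \<le> p" "p \<le> 1" "real N * p = (1 + \<eta>) * real q"
  shows "binomial_lower_tail N p q \<le> exp (- (\<eta> - ln (1 + \<eta>)) * real q)"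
proof -
  define y where "y = p * \<eta> / (1 + \<eta>)"
  have "p * \<eta> \<le> 1 * (1 + \<eta>)" using assms by (intro mult_mono) auto
  then have y: "0 \<le> y" "y \<le> 1" using assms unfolding y_def by (auto simp: divide_le_eq)
  have "binomial_lower_tail N p q \<le> (p * (1 / (1 + \<eta>)) + (1 - p)) ^ N / (1 / (1 + \<eta>)) ^ q"
    by (rule binomial_lower_tail_le) (use assms in auto)
  also have "\<dots> = (1 - y) ^ N * (1 + \<eta>) ^ q"
    using assms unfolding y_def by (simp add: field_simps power_one_over)
  also have "\<dots> \<le> exp (- y) ^ N * (1 + \<eta>) ^ q"
    using y assms exp_ge_add_one_self[of "- y"] by (intro mult_right_mono power_mono) auto
  also have "exp (- y) ^ N = exp (- (\<eta> * real q))"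
  proof -
    have "y * real N = \<eta> * real q" unfolding y_def using assms by (simp add: field_simps)
    then show ?thesis by (simp add: exp_of_nat_mult[symmetric] mult.commute)
  qed
  also have "(1 + \<eta>) ^ q = exp (real q * ln (1 + \<eta>))" using assms by (simp add: exp_of_nat_mult)
  also have "exp (- (\<eta> * real q)) * exp (real q * ln (1 + \<eta>)) = exp (- (\<eta> - ln (1 + \<eta>)) * real q)"
    by (simp add: exp_add[symmetric] algebra_simps)
  finally show ?thesis .
qed

lemma exp_le_one_minus_power:
  fixes t :: real
  assumes "0 \<le> t" "t < 1"
  shows "exp (- real M * t / (1 - t)) \<le> (1 - t) ^ M"
proof -
  have "ln (1 / (1 - t)) \<le> 1 / (1 - t) - 1" using assms by (intro ln_le_minus_one) simp
  then have "- t / (1 - t) \<le> ln (1 - t)" using assms by (simp add: ln_div field_simps)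
  then have "real M * (- t / (1 - t)) \<le> real M * ln (1 - t)" by (rule mult_left_mono) simp
  then have "exp (- real M * t / (1 - t)) \<le> exp (real M * ln (1 - t))" by simp
  also have "\<dots> = (1 - t) ^ M" using assms by (simp add: exp_of_nat_mult)
  finally show ?thesis .
qed

section \<open>The complete \<open>r\<close>-partite graph and its transversal cliques\<close>

definition is_partition :: "nat \<Rightarrow> nat \<Rightarrow> (nat \<Rightarrow> nat set) \<Rightarrow> bool" where
  "is_partition n r V \<longleftrightarrow> (\<Union>i<r. V i) = {1..n} \<and> (\<forall>i<r. \<forall>j<r. i \<noteq> j \<longrightarrow> V i \<inter> V j = {})"

lemma in_Pnr_is_partition: "in_Pnr n r \<gamma> V \<Longrightarrow> is_partition n r V"
  unfolding in_Pnr_def is_partition_def by (elim conjE) (intro conjI)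

lemma is_partition_part_eq:
  "is_partition n r V \<Longrightarrow> i < r \<Longrightarrow> j < r \<Longrightarrow> x \<in> V i \<Longrightarrow> x \<in> V j \<Longrightarrow> i = j"
  unfolding is_partition_def by blast

lemma is_partition_subset: "is_partition n r V \<Longrightarrow> i < r \<Longrightarrow> V i \<subseteq> {1..n}"
  unfolding is_partition_def by blast

lemma partite_graph_memI:
  "is_partition n r V \<Longrightarrow> a \<in> V i \<Longrightarrow> b \<in> V j \<Longrightarrow> i < r \<Longrightarrow> j < r \<Longrightarrow> i \<noteq> j
    \<Longrightarrow> {a, b} \<in> partite_graph n r V"
proof -
  assume "is_partition n r V" "a \<in> V i" "b \<in> V j" "i < r" "j < r" "i \<noteq> j"
  moreover from this have "a \<in> {1..n}" "b \<in> {1..n}" using is_partition_subset by blast+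
  ultimately show ?thesis unfolding partite_graph_def by blast
qed

lemma partite_graph_not_in_part:
  assumes "is_partition n r V" "k < r" "a \<in> V k" "b \<in> V k"
  shows "{a, b} \<notin> partite_graph n r V"
proof
  assume "{a, b} \<in> partite_graph n r V"
  then obtain x y i j where "{a, b} = {x, y}" "i < r" "j < r" "i \<noteq> j" "x \<in> V i" "y \<in> V j"
    unfolding partite_graph_def by blast
  moreover from this have "x \<in> V k" "y \<in> V k" using assms(3,4) by (auto simp: doubleton_eq_iff)
  ultimately show False using is_partition_part_eq[OF assms(1)] assms(2) by metis
qed

lemma partite_graph_subset_all_edges:
  assumes "is_partition n r V"
  shows "partite_graph n r V \<subseteq> all_edges n"
proof
  fix T assume "T \<in> partite_graph n r V"
  then obtain a b i j where T: "T = {a, b}" "a \<in> {1..n}" "b \<in> {1..n}"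
    and "i < r" "j < r" "i \<noteq> j" "a \<in> V i" "b \<in> V j"
    unfolding partite_graph_def by blast
  then have "a \<noteq> b" using is_partition_part_eq[OF assms] by blast
  then show "T \<in> all_edges n" unfolding all_edges_def using T by blast
qed

lemma finite_all_edges: "finite (all_edges n)"
proof -
  have "all_edges n \<subseteq> (\<lambda>(u, v). {u, v}) ` ({1..n} \<times> {1..n})" unfolding all_edges_def by auto
  then show ?thesis by (rule finite_subset) simp
qed

lemma finite_partite_graph: "is_partition n r V \<Longrightarrow> finite (partite_graph n r V)"
  by (rule finite_subset[OF partite_graph_subset_all_edges finite_all_edges])

lemma card_le_twice_card_doubletons:
  fixes X :: "('a::linorder \<times> 'a) set"
  assumes "finite X" "\<forall>(a, b)\<in>X. a \<noteq> b"
  shows "card X \<le> 2 * card ((\<lambda>(a, b). {a, b}) ` X)"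
proof -
  let ?d = "\<lambda>(a, b). {a, b}"
  have bound: "card Y \<le> card (?d ` X)" if "Y \<subseteq> X" "inj_on ?d Y" for Y
  proof -
    have "card Y = card (?d ` Y)" using that(2) by (simp add: card_image)
    also have "\<dots> \<le> card (?d ` X)" using that(1) assms(1) by (intro card_mono image_mono) auto
    finally show ?thesis .
  qed
  define X1 where "X1 = {(a, b) \<in> X. a < b}"
  define X2 where "X2 = {(a, b) \<in> X. b < a}"
  have "inj_on ?d X1" "inj_on ?d X2"
    unfolding X1_def X2_def inj_on_def by (auto simp: doubleton_eq_iff)
  then have "card X1 \<le> card (?d ` X)" "card X2 \<le> card (?d ` X)"
    by (auto intro!: bound simp: X1_def X2_def)
  moreover have "X = X1 \<union> X2" using assms(2) unfolding X1_def X2_def by (auto simp: neq_iff)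
  then have "card X \<le> card X1 + card X2" by (simp add: card_Un_le)
  ultimately show ?thesis by linarith
qed

lemma card_partite_graph_ge:
  assumes "in_Pnr n r \<gamma> V"
  shows "real n * real n * (1 - 1 / real r - \<gamma>) \<le> 2 * real (card (partite_graph n r V))"
proof -
  have V: "is_partition n r V" by (rule in_Pnr_is_partition[OF assms])
  have C: "\<forall>k<r. real (card (V k)) \<le> (1 / real r + \<gamma>) * real n"
    using assms unfolding in_Pnr_def by auto
  have sub: "V k \<subseteq> {1..n}" if "k < r" for k using is_partition_subset[OF V that] .
  have fin: "finite (V k)" if "k < r" for k using finite_subset[OF sub[OF that]] by simp
  define X where "X = (\<Union>k<r. V k \<times> ({1..n} - V k))"
  have disj: "\<forall>k<r. \<forall>l<r. k \<noteq> l \<longrightarrow> V k \<inter> V l = {}" using V unfolding is_partition_def by blast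
  have "(\<Sum>k<r. card (V k)) = n"
    using V fin disj card_UN_disjoint[of "{..<r}" V] unfolding is_partition_def by auto
  then have "real n * real n * (1 - 1 / real r - \<gamma>)
      = (\<Sum>k<r. real (card (V k))) * (real n - (1 / real r + \<gamma>) * real n)"
    by (simp add: algebra_simps flip: of_nat_sum)
  also have "\<dots> = (\<Sum>k<r. real (card (V k)) * (real n - (1 / real r + \<gamma>) * real n))"
    by (simp add: sum_distrib_right)
  also have "\<dots> \<le> (\<Sum>k<r. real (card (V k)) * (real n - real (card (V k))))"
    using C by (intro sum_mono mult_left_mono) auto
  also have "\<dots> = (\<Sum>k<r. real (card (V k \<times> ({1..n} - V k))))"
    using sub fin card_mono[OF _ sub]
    by (intro sum.cong) (auto simp: card_cartesian_product card_Diff_subset of_nat_diff)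
  also have "\<dots> = real (card X)"
    unfolding X_def using fin disj by (subst card_UN_disjoint) auto
  also have "card X \<le> 2 * card ((\<lambda>(a, b). {a, b}) ` X)"
    by (rule card_le_twice_card_doubletons) (auto simp: X_def fin)
  also have "(\<lambda>(a, b). {a, b}) ` X \<subseteq> partite_graph n r V"
  proof
    fix T assume "T \<in> (\<lambda>(a, b). {a, b}) ` X"
    then obtain a b k where T: "T = {a, b}" "k < r" "a \<in> V k" "b \<in> {1..n}" "b \<notin> V k"
      unfolding X_def by auto
    moreover obtain l where "l < r" "b \<in> V l" using T V unfolding is_partition_def by blast
    ultimately show "T \<in> partite_graph n r V" using partite_graph_memI[OF V] by blast
  qed
  then have "card ((\<lambda>(a, b). {a, b}) ` X) \<le> card (partite_graph n r V)"
    by (rule card_mono[OF finite_partite_graph[OF V]])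
  finally show ?thesis by simp
qed

lemma card_partite_graph_ge_scaled:
  assumes "in_Pnr n r \<gamma> V" "2 \<le> r" "0 \<le> \<gamma>"
  shows "(real r - 1) / (2 * real r) * (1 - real r * \<gamma>) * real n ^ 2 \<le> real (card (partite_graph n r V))"
proof -
  define c where "c = (real r - 1) / (2 * real r) * (1 - real r * \<gamma>)"
  have rr: "real r \<ge> 2" using assms by simp
  have "1 * \<gamma> \<le> (real r - 1) * \<gamma>" using rr assms by (intro mult_right_mono) auto
  moreover have "(real r - 1) / real r = 1 - 1 / real r" using rr by (simp add: field_simps)
  moreover have "2 * c = (real r - 1) / real r - (real r - 1) * \<gamma>"
    unfolding c_def using rr by (simp add: field_simps)
  ultimately have "2 * c * (real n * real n) \<le> (1 - 1 / real r - \<gamma>) * (real n * real n)"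
    by (intro mult_right_mono) auto
  moreover have "(1 - 1 / real r - \<gamma>) * (real n * real n) \<le> 2 * real (card (partite_graph n r V))"
    using card_partite_graph_ge[OF assms(1)] by (simp add: mult.commute)
  ultimately show ?thesis unfolding c_def[symmetric] power2_eq_square by linarith
qed
definition transversals :: "nat \<Rightarrow> (nat \<Rightarrow> nat set) \<Rightarrow> nat \<Rightarrow> (nat \<Rightarrow> nat) set" where
  "transversals r V i = Pi\<^sub>E {j. j < r \<and> j \<noteq> i} V"

definition transversal_edges :: "nat \<Rightarrow> nat \<Rightarrow> nat \<Rightarrow> nat \<Rightarrow> (nat \<Rightarrow> nat) \<Rightarrow> nat set set" where
  "transversal_edges r i u v f =
     {T. T \<subseteq> insert u (insert v (f ` {j. j < r \<and> j \<noteq> i})) \<and> card T = 2} - {{u, v}}"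

definition avoids_transversals ::
    "nat \<Rightarrow> (nat \<Rightarrow> nat set) \<Rightarrow> nat \<Rightarrow> nat \<Rightarrow> nat \<Rightarrow> nat set set \<Rightarrow> bool" where
  "avoids_transversals r V i u v G \<longleftrightarrow> (\<forall>f\<in>transversals r V i. \<not> transversal_edges r i u v f \<subseteq> G)"

lemma down_closed_avoids_transversals: "down_closed (avoids_transversals r V i u v)"
  unfolding down_closed_def avoids_transversals_def by blast

lemma card_other_parts: "i < r \<Longrightarrow> card {j. j < r \<and> j \<noteq> i} = r - 1"
proof -
  assume "i < r"
  moreover have "{j. j < r \<and> j \<noteq> i} = {..<r} - {i}" by auto
  ultimately show ?thesis by simp
qed

lemma card_transversals_le:
  assumes "in_Pnr n r \<gamma> V" "i < r"
  shows "real (card (transversals r V i)) \<le> ((1 / real r + \<gamma>) * real n) ^ (r - 1)"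
proof -
  define J where "J = {j. j < r \<and> j \<noteq> i}"
  have "real (card (transversals r V i)) = (\<Prod>j\<in>J. real (card (V j)))"
    unfolding transversals_def J_def by (simp add: card_PiE)
  also have "\<dots> \<le> (\<Prod>j\<in>J. (1 / real r + \<gamma>) * real n)"
    using assms(1) unfolding in_Pnr_def J_def by (intro prod_mono) auto
  also have "\<dots> = ((1 / real r + \<gamma>) * real n) ^ (r - 1)"
    using card_other_parts[OF assms(2)] unfolding J_def by simp
  finally show ?thesis .
qed

context
  fixes n r :: nat and V :: "nat \<Rightarrow> nat set" and i u v :: nat and f :: "nat \<Rightarrow> nat"
  assumes V: "is_partition n r V"
    and uv: "u \<in> V i" "v \<in> V i" "i < r" "u \<noteq> v"
    and f: "f \<in> transversals r V i"
begin

private abbreviation (input) "J \<equiv> {j. j < r \<and> j \<noteq> i}"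

private lemma transversal_in_part: "j \<in> J \<Longrightarrow> f j \<in> V j"
  using f unfolding transversals_def by auto

private lemma transversal_not_in_part_i: "j \<in> J \<Longrightarrow> f j \<notin> V i"
  using transversal_in_part is_partition_part_eq[OF V, of i j] uv(3) by auto

private lemma transversal_clique_in_parts:
  "w \<in> insert u (insert v (f ` J)) \<Longrightarrow> \<exists>k<r. w \<in> V k"
  using uv transversal_in_part by auto

private lemma transversal_same_part:
  assumes "a \<in> insert u (insert v (f ` J))" "b \<in> insert u (insert v (f ` J))" "a \<noteq> b"
    and "k < r" "a \<in> V k" "b \<in> V k"
  shows "{a, b} = {u, v}"
proof (cases "a \<in> {u, v}")
  case True
  then have "k = i" using uv assms(4,5) is_partition_part_eq[OF V] by blast
  then have "b \<notin> f ` J" using assms(6) transversal_not_in_part_i by blast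
  then show ?thesis using True assms(2,3) by auto
next
  case False
  then obtain j where j: "j \<in> J" "a = f j" using assms(1) by blast
  then have "k = j" using assms(4,5) transversal_in_part is_partition_part_eq[OF V] by blast
  have "b \<notin> V i" using is_partition_part_eq[OF V, of i j b] j uv(3) assms(6) \<open>k = j\<close> by auto
  then have "b \<notin> {u, v}" using uv(1,2) by auto
  then obtain j' where j': "j' \<in> J" "b = f j'" using assms(2) by blast
  then have "j' = k" using assms(4,6) transversal_in_part is_partition_part_eq[OF V] by blast
  then show ?thesis using j j' \<open>k = j\<close> assms(3) by simp
qed

lemma transversal_edges_subset_partite_graph:
  "transversal_edges r i u v f \<subseteq> partite_graph n r V"
proof
  fix T assume "T \<in> transversal_edges r i u v f"
  then have T: "T \<subseteq> insert u (insert v (f ` J))" "card T = 2" "T \<noteq> {u, v}"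
    unfolding transversal_edges_def by auto
  then obtain a b where ab: "T = {a, b}" "a \<noteq> b" by (meson card_2_iff)
  with T have "a \<in> insert u (insert v (f ` J))" "b \<in> insert u (insert v (f ` J))" by auto
  moreover from this obtain k l where kl: "k < r" "a \<in> V k" "l < r" "b \<in> V l"
    using transversal_clique_in_parts by meson
  ultimately have "k \<noteq> l" using transversal_same_part ab T(3) by blast
  then show "T \<in> partite_graph n r V" unfolding ab(1) using kl partite_graph_memI[OF V] by blast
qed

lemma card_transversal_edges: "card (transversal_edges r i u v f) = (r + 1 choose 2) - 1"
proof -
  define W where "W = insert u (insert v (f ` J))"
  have "inj_on f J"
  proof (rule inj_onI)
    fix j j' assume "j \<in> J" "j' \<in> J" "f j = f j'"
    then show "j = j'"
      using transversal_in_part[of j] transversal_in_part[of j'] is_partition_part_eq[OF V, of j j' "f j"]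
      by simp
  qed
  then have "card (f ` J) = r - 1" using card_other_parts[OF uv(3)] by (simp add: card_image)
  moreover have "u \<notin> f ` J" "v \<notin> f ` J" using uv transversal_not_in_part_i by blast+
  ultimately have "card W = r + 1" unfolding W_def using uv by simp
  then have "card {T. T \<subseteq> W \<and> card T = 2} = r + 1 choose 2"
    using n_subsets[of W 2] by (simp add: W_def)
  moreover have "{u, v} \<in> {T. T \<subseteq> W \<and> card T = 2}" unfolding W_def using uv(4) by auto
  ultimately show ?thesis
    unfolding transversal_edges_def W_def[symmetric] by (simp add: card_Diff_singleton)
qed

end

lemma inverse_in_PiE:
  assumes "inj_on g S" "g ` S = J" "\<And>w. w \<in> S \<Longrightarrow> w \<in> V (g w)"
  shows "\<exists>f\<in>Pi\<^sub>E J V. f ` J \<subseteq> S"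
proof
  let ?f = "restrict (the_inv_into S g) J"
  have "the_inv_into S g j \<in> S" "g (the_inv_into S g j) = j" if "j \<in> J" for j
    using that assms(2) by (auto simp: the_inv_into_into[OF assms(1)] f_the_inv_into_f[OF assms(1)])
  then show "?f \<in> Pi\<^sub>E J V" "?f ` J \<subseteq> S" using assms(3) by fastforce+
qed

lemma clique_contains_transversal:
  assumes V: "is_partition n r V" and uv: "u \<in> V i" "v \<in> V i" "i < r" "u \<noteq> v"
    and G: "G \<subseteq> partite_graph n r V"
    and S: "S \<subseteq> {1..n}" "card S = r + 1" "\<forall>a\<in>S. \<forall>b\<in>S. a \<noteq> b \<longrightarrow> {a, b} \<in> insert {u, v} G"
  shows "\<exists>f\<in>transversals r V i. insert u (insert v (f ` {j. j < r \<and> j \<noteq> i})) \<subseteq> S"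
proof -
  define J where "J = {j. j < r \<and> j \<noteq> i}"
  have "\<forall>w\<in>{1..n}. \<exists>k. k < r \<and> w \<in> V k" using V unfolding is_partition_def by blast
  then obtain part where part: "\<And>w. w \<in> {1..n} \<Longrightarrow> part w < r \<and> w \<in> V (part w)" by metis
  have part_S: "part w < r" "w \<in> V (part w)" if "w \<in> S" for w
    using part[of w] that S(1) by auto
  have same_part: "{a, b} = {u, v}" if "a \<in> S" "b \<in> S" "a \<noteq> b" "part a = part b" for a b
  proof -
    have "{a, b} \<notin> partite_graph n r V"
      using partite_graph_not_in_part[OF V] part_S that by metis
    moreover have "{a, b} \<in> insert {u, v} G" using S(3) that by blast
    ultimately show ?thesis using G by blast
  qed
  have finS: "finite S" using S(1) finite_subset by blast
  \<comment> \<open>pigeonhole: \<open>r + 1\<close> vertices in \<open>r\<close> parts\<close>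
  have "\<not> inj_on part S"
  proof
    assume "inj_on part S"
    moreover have "part ` S \<subseteq> {..<r}" using part_S by auto
    ultimately have "card S \<le> r" using card_inj_on_le[of part S "{..<r}"] by simp
    then show False using S(2) by simp
  qed
  then obtain a b where ab: "a \<in> S" "b \<in> S" "a \<noteq> b" "part a = part b" unfolding inj_on_def by blast
  then have "{a, b} = {u, v}" by (rule same_part)
  then have uvS: "u \<in> S" "v \<in> S" using ab by (auto simp: doubleton_eq_iff)
  have part_u: "part u = i"
    using part_S[OF uvS(1)] uv(1,3) is_partition_part_eq[OF V] by blast
  define S' where "S' = S - {u, v}"
  have "card S' = r - 1" unfolding S'_def using uvS uv(4) S(2) finS by (subst card_Diff_subset) auto
  moreover have inj: "inj_on part S'"
  proof (rule inj_onI)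
    fix a b assume "a \<in> S'" "b \<in> S'" "part a = part b"
    then show "a = b" using same_part[of a b] unfolding S'_def by (auto simp: doubleton_eq_iff)
  qed
  moreover have "part ` S' \<subseteq> J"
  proof
    fix k assume "k \<in> part ` S'"
    then obtain w where w: "w \<in> S'" "k = part w" by blast
    have "part w \<noteq> part u"
    proof
      assume "part w = part u"
      then have "{w, u} = {u, v}" using same_part[of w u] w(1) uvS unfolding S'_def by auto
      then show False using w(1) unfolding S'_def by (auto simp: doubleton_eq_iff)
    qed
    then show "k \<in> J" using part_S[of w] w part_u unfolding S'_def J_def by auto
  qed
  moreover have "card J = r - 1" unfolding J_def by (rule card_other_parts[OF uv(3)])
  ultimately have image: "part ` S' = J"
    by (intro card_subset_eq) (auto simp: J_def card_image)
  have "w \<in> V (part w)" if "w \<in> S'" for w using part_S that unfolding S'_def by blast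
  then obtain f where "f \<in> Pi\<^sub>E J V" "f ` J \<subseteq> S'" using inverse_in_PiE[OF inj image] by blast
  then show ?thesis using uvS unfolding transversals_def J_def S'_def by (intro bexI[of _ f]) auto
qed

lemma avoids_transversals_imp_no_clique:
  assumes V: "is_partition n r V" and uv: "u \<in> V i" "v \<in> V i" "i < r" "u \<noteq> v"
    and G: "G \<subseteq> partite_graph n r V" and A: "avoids_transversals r V i u v G"
  shows "\<not> has_clique n (r + 1) (insert {u, v} G)"
proof
  assume "has_clique n (r + 1) (insert {u, v} G)"
  then obtain S where S: "S \<subseteq> {1..n}" "card S = r + 1"
    "\<forall>a\<in>S. \<forall>b\<in>S. a \<noteq> b \<longrightarrow> {a, b} \<in> insert {u, v} G"
    unfolding has_clique_def by blast
  obtain f where f: "f \<in> transversals r V i" "insert u (insert v (f ` {j. j < r \<and> j \<noteq> i})) \<subseteq> S"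
    using clique_contains_transversal[OF V uv G S] by blast
  have "transversal_edges r i u v f \<subseteq> G"
  proof
    fix T assume "T \<in> transversal_edges r i u v f"
    then have T: "T \<subseteq> S" "card T = 2" "T \<noteq> {u, v}" unfolding transversal_edges_def using f(2) by auto
    then obtain a b where "T = {a, b}" "a \<noteq> b" by (meson card_2_iff)
    then show "T \<in> G" using S(3) T by auto
  qed
  then show False using A f(1) unfolding avoids_transversals_def by blast
qed

lemma slice_count_avoids_transversals_le:
  assumes V: "is_partition n r V" and uv: "u \<in> V i" "v \<in> V i" "i < r" "u \<noteq> v" and m: "1 \<le> m"
  shows "slice_count (partite_graph n r V) (avoids_transversals r V i u v) (m - 1)
    \<le> card (G_plus n r V m {u, v} \<inter> F_free n m r)"
proof -
  define E where "E = partite_graph n r V"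
  define X where "X = {G. G \<subseteq> E \<and> card G = m - 1 \<and> avoids_transversals r V i u v G}"
  have finE: "finite E" unfolding E_def by (rule finite_partite_graph[OF V])
  have uvE: "{u, v} \<notin> E" unfolding E_def by (rule partite_graph_not_in_part[OF V uv(3,1,2)])
  have "inj_on (insert {u, v}) X"
    using uvE unfolding X_def inj_on_def by (metis insert_ident subsetD mem_Collect_eq)
  moreover have "insert {u, v} ` X \<subseteq> G_plus n r V m {u, v} \<inter> F_free n m r"
  proof
    fix H assume "H \<in> insert {u, v} ` X"
    then obtain G where G: "H = insert {u, v} G" "G \<subseteq> E" "card G = m - 1"
      "avoids_transversals r V i u v G"
      unfolding X_def by blast
    have "H \<in> G_plus n r V m {u, v}" unfolding G_plus_def G_sub_def E_def[symmetric] using G by blast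
    moreover have "{u, v} \<in> all_edges n"
      using is_partition_subset[OF V uv(3)] uv unfolding all_edges_def by blast
    moreover have "G \<subseteq> all_edges n" using G(2) partite_graph_subset_all_edges[OF V] E_def by blast
    moreover have "card H = m"
    proof -
      have "finite G" "{u, v} \<notin> G" using finite_subset[OF G(2) finE] G(2) uvE by auto
      then show ?thesis using G(1,3) m by simp
    qed
    moreover have "\<not> has_clique n (r + 1) H"
      using avoids_transversals_imp_no_clique[OF V uv _ G(4)] G(1,2) unfolding E_def by blast
    ultimately show "H \<in> G_plus n r V m {u, v} \<inter> F_free n m r"
      unfolding F_free_def using G(1) by blast
  qed
  moreover have "finite (G_plus n r V m {u, v} \<inter> F_free n m r)"
    using finE unfolding G_plus_def G_sub_def E_def by simp
  ultimately have "card X \<le> card (G_plus n r V m {u, v} \<inter> F_free n m r)"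
    by (metis card_image card_mono)
  then show ?thesis unfolding slice_count_def X_def E_def by simp
qed

section \<open>The constant \<open>\<theta>\<^sub>r\<close>\<close>

lemma real_choose_two_minus_one:
  assumes "2 \<le> r"
  shows "real ((r + 1 choose 2) - 1) = (real r + 2) * (real r - 1) / 2"
proof -
  have "even ((r + 1) * r)" by simp
  then have "real (r + 1 choose 2) = (real r + 1) * real r / 2"
    by (simp add: choose_two real_of_nat_div algebra_simps)
  moreover have "1 \<le> r + 1 choose 2" using assms by (simp add: choose_two)
  ultimately show ?thesis by (simp add: of_nat_diff field_simps)
qed

lemma two_le_choose_two_minus_one: "2 \<le> r \<Longrightarrow> 2 \<le> (r + 1 choose 2) - 1"
proof -
  assume r: "2 \<le> r"
  then have "(real r + 2) * (real r - 1) \<ge> 4 * 1" by (intro mult_mono) auto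
  then show ?thesis using real_choose_two_minus_one[OF r] by simp
qed

lemma theta_pos: "2 \<le> r \<Longrightarrow> theta r > 0"
  unfolding theta_def by (intro mult_pos_pos) auto

lemma m_r_eq:
  assumes "2 \<le> r"
  shows "m_r r n = theta r * real n powr ((2 * real r + 2) / (real r + 2))
    * ln (real n) powr (1 / real ((r + 1 choose 2) - 1))"
proof -
  have "1 \<le> r + 1 choose 2" using assms by (simp add: choose_two)
  moreover have "2 - 2 / (real r + 2) = (2 * real r + 2) / (real r + 2)" by (simp add: field_simps)
  ultimately show ?thesis unfolding m_r_def by (simp add: of_nat_diff)
qed

lemma m_r_pos: "2 \<le> r \<Longrightarrow> 2 \<le> n \<Longrightarrow> 0 < m_r r n"
  unfolding m_r_eq using theta_pos by simp

lemma theta_power: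
  assumes r: "2 \<le> r"
  shows "(theta r / ((real r - 1) / (2 * real r))) ^ ((r + 1 choose 2) - 1)
       = real r ^ (r - 1) * ((2 * real r + 2) / (real r + 2))"
proof -
  define c0 where "c0 = (real r - 1) / (2 * real r)"
  define A where "A = (2 * real r + 2) / (real r + 2)"
  define Y where "Y = real r * A powr (1 / (real r - 1))"
  define s where "s = (r + 1 choose 2) - 1"
  have rr: "real r \<ge> 2" using r by simp
  have pos: "c0 > 0" "A > 0" "Y > 0" unfolding c0_def A_def Y_def using rr by auto
  have "(theta r / c0) ^ s = (Y powr (2 / (real r + 2))) ^ s"
    using pos r unfolding theta_def c0_def Y_def A_def by simp
  also have "\<dots> = Y powr (real s * (2 / (real r + 2)))" using pos by (simp add: powr_power)
  also have "real s * (2 / (real r + 2)) = real (r - 1)"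
    using real_choose_two_minus_one[OF r] rr unfolding s_def by (simp add: field_simps of_nat_diff)
  also have "Y powr real (r - 1) = real r ^ (r - 1) * (A powr (1 / (real r - 1))) ^ (r - 1)"
    using pos unfolding Y_def by (simp add: powr_realpow power_mult_distrib)
  also have "(A powr (1 / (real r - 1))) ^ (r - 1) = A powr (real (r - 1) * (1 / (real r - 1)))"
    using pos by (simp add: powr_power)
  also have "real (r - 1) * (1 / (real r - 1)) = 1" using rr by (simp add: of_nat_diff)
  finally show ?thesis using pos unfolding c0_def A_def s_def by simp
qed

text \<open>This identity is what determines \<open>\<theta>\<^sub>r\<close> and the exponents in \<open>m\<^sub>r\<close>.\<close>

lemma m_r_power:
  assumes r: "2 \<le> r" and n: "2 \<le> n"
  shows "(real n / real r) ^ (r - 1) * (m_r r n / ((real r - 1) / (2 * real r) * real n ^ 2)) ^ ((r + 1 choose 2) - 1)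
       = (2 * real r + 2) / (real r + 2) * ln (real n)"
proof -
  define c0 where "c0 = (real r - 1) / (2 * real r)"
  define A where "A = (2 * real r + 2) / (real r + 2)"
  define s where "s = (r + 1 choose 2) - 1"
  define L where "L = ln (real n)"
  have rr: "real r \<ge> 2" and nn: "real n \<ge> 2" using r n by simp_all
  have L: "L > 0" and c0: "c0 > 0" unfolding L_def c0_def using rr nn by simp_all
  have s: "real s = (real r + 2) * (real r - 1) / 2"
    unfolding s_def by (rule real_choose_two_minus_one[OF r])
  have "real s > 0" using rr unfolding s by simp
  have "real n ^ 2 = real n powr 2" using powr_realpow[of "real n" 2] nn by simp
  then have "real n powr A / real n ^ 2 = real n powr (A - 2)" by (simp add: powr_diff)
  moreover have "m_r r n / (c0 * real n ^ 2) = (theta r / c0) * (real n powr A / real n ^ 2) * L powr (1 / real s)"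
    unfolding m_r_eq[OF r] A_def[symmetric] s_def[symmetric] L_def[symmetric] using c0 by simp
  ultimately have e1: "m_r r n / (c0 * real n ^ 2) = (theta r / c0) * real n powr (A - 2) * L powr (1 / real s)"
    by simp
  have "(real n powr (A - 2)) ^ s = real n powr (real s * (A - 2))" using nn by (simp add: powr_power)
  also have "real s * (A - 2) = - real (r - 1)" unfolding A_def s using rr by (simp add: field_simps of_nat_diff)
  finally have e2: "(real n powr (A - 2)) ^ s = real n powr (- real (r - 1))" .
  have "(L powr (1 / real s)) ^ s = L powr (real s * (1 / real s))" using L by (simp add: powr_power)
  then have e3: "(L powr (1 / real s)) ^ s = L" using \<open>real s > 0\<close> L by simp
  have e4: "(real n / real r) ^ (r - 1) = real n powr real (r - 1) / real r ^ (r - 1)"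
    using nn by (simp add: power_divide powr_realpow)
  have "(real n / real r) ^ (r - 1) * (m_r r n / (c0 * real n ^ 2)) ^ s
      = real n powr real (r - 1) / real r ^ (r - 1) * ((theta r / c0) ^ s * real n powr (- real (r - 1)) * L)"
    unfolding e1 e4 power_mult_distrib e2 e3 ..
  also have "(theta r / c0) ^ s = real r ^ (r - 1) * A"
    unfolding c0_def s_def A_def by (rule theta_power[OF r])
  also have "real n powr real (r - 1) / real r ^ (r - 1) * (real r ^ (r - 1) * A * real n powr (- real (r - 1)) * L)
      = (real n powr real (r - 1) * real n powr (- real (r - 1))) * A * L"
    using rr by (simp add: field_simps)
  also have "real n powr real (r - 1) * real n powr (- real (r - 1)) = 1"
    using nn by (simp add: powr_add[symmetric])
  finally show ?thesis unfolding c0_def s_def A_def L_def by simp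
qed

section \<open>The density of \<open>K\<^sub>r\<^sub>+\<^sub>1\<close>-free extensions\<close>

lemma free_fraction_ge:
  assumes P: "in_Pnr n r \<gamma> V" and e: "e \<in> partite_compl n r V"
    and m: "1 \<le> m" "m - 1 \<le> card (partite_graph n r V)"
    and p: "0 \<le> p" "p < 1" and "0 \<le> \<gamma>" and r: "2 \<le> r"
  defines "t \<equiv> p ^ ((r + 1 choose 2) - 1)"
  shows "exp (- (((1 / real r + \<gamma>) * real n) ^ (r - 1)) * t / (1 - t))
       - binomial_lower_tail (card (partite_graph n r V)) p (m - 1)
     \<le> real (card (G_plus n r V m e \<inter> F_free n m r)) / real (card (partite_graph n r V) choose (m - 1))"
proof -
  have V: "is_partition n r V" by (rule in_Pnr_is_partition[OF P])
  obtain u v i where uv: "e = {u, v}" "u \<in> V i" "v \<in> V i" "i < r" "u \<noteq> v"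
    using e unfolding partite_compl_def by blast
  define E where "E = partite_graph n r V"
  define s where "s = (r + 1 choose 2) - 1"
  define I where "I = transversals r V i"
  have finE: "finite E" unfolding E_def by (rule finite_partite_graph[OF V])
  have "finite (V j)" if "j < r" for j using finite_subset[OF is_partition_subset[OF V that]] by simp
  then have finI: "finite I" unfolding I_def transversals_def by (intro finite_PiE) auto
  have "3 * 2 \<le> (r + 1) * r" using r by (intro mult_le_mono) auto
  then have "s \<noteq> 0" unfolding s_def by (simp add: choose_two)
  then have t: "0 \<le> t" "t < 1" unfolding t_def s_def[symmetric] using p by (auto simp: power_less_one_iff)
  have "(1 - t) ^ card I = (\<Prod>f\<in>I. subset_prob p E (\<lambda>G. \<not> transversal_edges r i u v f \<subseteq> G))"
  proof (subst prod.cong)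
    fix f assume "f \<in> I"
    then have "transversal_edges r i u v f \<subseteq> E" "card (transversal_edges r i u v f) = s"
      using transversal_edges_subset_partite_graph[OF V uv(2-5)] card_transversal_edges[OF V uv(2-5)]
      unfolding I_def E_def s_def by auto
    then show "subset_prob p E (\<lambda>G. \<not> transversal_edges r i u v f \<subseteq> G) = 1 - t"
      unfolding subset_prob_Not[OF finE] t_def s_def[symmetric] by (simp add: subset_prob_superset[OF finE])
  qed simp_all
  also have "\<dots> \<le> subset_prob p E (avoids_transversals r V i u v)"
    unfolding avoids_transversals_def I_def[symmetric]
    using p by (intro harris_inequality_prod[OF finE _ _ finI]) (auto simp: down_closed_def)
  also have "\<dots> \<le> binomial_lower_tail (card E) p (m - 1) + slice_density E (avoids_transversals r V i u v) (m - 1)"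
    using m p unfolding E_def
    by (intro subset_prob_le_tail_plus_slice_density finite_partite_graph[OF V] down_closed_avoids_transversals) auto
  also have "slice_density E (avoids_transversals r V i u v) (m - 1)
      \<le> real (card (G_plus n r V m e \<inter> F_free n m r)) / real (card E choose (m - 1))"
    unfolding slice_density_def E_def uv(1)
    using slice_count_avoids_transversals_le[OF V uv(2-5) m(1)] by (simp add: divide_right_mono)
  finally have "(1 - t) ^ card I - binomial_lower_tail (card E) p (m - 1)
      \<le> real (card (G_plus n r V m e \<inter> F_free n m r)) / real (card E choose (m - 1))"
    by simp
  moreover have "exp (- (((1 / real r + \<gamma>) * real n) ^ (r - 1)) * t / (1 - t)) \<le> (1 - t) ^ card I"
  proof -
    have "real (card I) \<le> ((1 / real r + \<gamma>) * real n) ^ (r - 1)"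
      unfolding I_def by (rule card_transversals_le[OF P uv(4)])
    then have "exp (- (((1 / real r + \<gamma>) * real n) ^ (r - 1)) * t / (1 - t)) \<le> exp (- real (card I) * t / (1 - t))"
      using t by (simp add: divide_right_mono mult_right_mono)
    also have "\<dots> \<le> (1 - t) ^ card I" by (rule exp_le_one_minus_power[OF t])
    finally show ?thesis .
  qed
  ultimately show ?thesis unfolding E_def by linarith
qed

lemma transversals_times_prob_le:
  assumes r: "2 \<le> r" and n: "2 \<le> n" and "0 \<le> \<gamma>" "0 \<le> p" "0 \<le> x"
    and p: "p \<le> x / ((real r - 1) / (2 * real r) * real n ^ 2)"
  shows "((1 / real r + \<gamma>) * real n) ^ (r - 1) * p ^ ((r + 1 choose 2) - 1)
    \<le> (1 + \<gamma> * real r) ^ (r - 1) * (x / m_r r n) ^ ((r + 1 choose 2) - 1)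
        * ((2 * real r + 2) / (real r + 2)) * ln (real n)"
proof -
  define s where "s = (r + 1 choose 2) - 1"
  define c0 where "c0 = (real r - 1) / (2 * real r)"
  have rr: "real r \<ge> 2" and nn: "real n \<ge> 2" using r n by simp_all
  have "m_r r n > 0" by (rule m_r_pos[OF r n])
  have "x / (c0 * real n ^ 2) = (x / m_r r n) * (m_r r n / (c0 * real n ^ 2))"
    using \<open>m_r r n > 0\<close> by simp
  then have "p ^ s \<le> (x / m_r r n) ^ s * (m_r r n / (c0 * real n ^ 2)) ^ s"
    unfolding power_mult_distrib[symmetric] using assms unfolding c0_def
    by (intro power_mono) auto
  moreover have "((1 / real r + \<gamma>) * real n) ^ (r - 1) = (1 + \<gamma> * real r) ^ (r - 1) * (real n / real r) ^ (r - 1)"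
    using rr by (simp add: power_mult_distrib[symmetric] field_simps)
  ultimately have "((1 / real r + \<gamma>) * real n) ^ (r - 1) * p ^ s
      \<le> (1 + \<gamma> * real r) ^ (r - 1) * (real n / real r) ^ (r - 1) * ((x / m_r r n) ^ s * (m_r r n / (c0 * real n ^ 2)) ^ s)"
    using assms rr by (simp only:) (intro mult_left_mono, auto)
  also have "\<dots> = (1 + \<gamma> * real r) ^ (r - 1) * (x / m_r r n) ^ s
      * ((real n / real r) ^ (r - 1) * (m_r r n / (c0 * real n ^ 2)) ^ s)"
    by (simp only: ac_simps)
  finally show ?thesis using m_r_power[OF r n] unfolding s_def c0_def by (simp only: mult.assoc)
qed

lemma free_fraction_ge_exp:
  assumes r: "2 \<le> r" and "0 < \<eta>" "0 \<le> \<gamma>" "real r * \<gamma> < 1"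
    and P: "in_Pnr n r \<gamma> V" and e: "e \<in> partite_compl n r V" and n: "2 \<le> n" "n \<le> m"
    and \<tau>: "\<tau> < 1"
    and small: "(1 + \<eta>) * real m / ((1 - real r * \<gamma>) * ((real r - 1) / (2 * real r)) * real n ^ 2) \<le> \<tau>"
  shows "exp (- ((1 + \<gamma> * real r) ^ (r - 1) * ((1 + \<eta>) * real m / ((1 - real r * \<gamma>) * m_r r n)) ^ ((r + 1 choose 2) - 1)
             * ((2 * real r + 2) / (real r + 2)) * ln (real n) / (1 - \<tau>)))
         - exp (- (\<eta> - ln (1 + \<eta>)) * (real n - 1))
       \<le> real (card (G_plus n r V m e \<inter> F_free n m r)) / real (card (partite_graph n r V) choose (m - 1))"
proof -
  define N where "N = card (partite_graph n r V)"
  define \<beta> where "\<beta> = 1 - real r * \<gamma>"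
  define c0 where "c0 = (real r - 1) / (2 * real r)"
  define p where "p = (1 + \<eta>) * real (m - 1) / real N"
  define t where "t = p ^ ((r + 1 choose 2) - 1)"
  define Mb where "Mb = ((1 / real r + \<gamma>) * real n) ^ (r - 1)"
  have rr: "real r \<ge> 2" and nn: "real n \<ge> 2" using r n by simp_all
  have pos: "0 < \<beta>" "0 < c0" "0 < c0 * \<beta> * real n ^ 2"
    using assms rr nn unfolding \<beta>_def c0_def by auto
  have N: "c0 * \<beta> * real n ^ 2 \<le> real N"
    using card_partite_graph_ge_scaled[OF P r \<open>0 \<le> \<gamma>\<close>] unfolding N_def c0_def \<beta>_def .
  have p: "0 \<le> p" "p \<le> (1 + \<eta>) * real m / (c0 * \<beta> * real n ^ 2)"
    unfolding p_def using assms pos N by (auto intro!: frac_le mult_left_mono)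
  then have "p \<le> \<tau>" using small unfolding \<beta>_def c0_def by (simp add: ac_simps)
  have Np: "real N * p = (1 + \<eta>) * real (m - 1)" using pos N unfolding p_def by simp
  moreover have "real N * p \<le> real N" using \<open>p \<le> \<tau>\<close> \<tau> pos N by (intro mult_left_le) auto
  moreover have "real (m - 1) \<le> (1 + \<eta>) * real (m - 1)" using assms by simp
  ultimately have "m - 1 \<le> N" by linarith
  have s: "1 \<le> (r + 1 choose 2) - 1" using two_le_choose_two_minus_one[OF r] by simp
  have t: "0 \<le> t" "t \<le> p" "t < 1"
    using \<open>p \<le> \<tau>\<close> \<tau> p(1) power_decreasing[OF s, of p] unfolding t_def by auto
  define X where "X = (1 + \<gamma> * real r) ^ (r - 1)
    * ((1 + \<eta>) * real m / ((1 - real r * \<gamma>) * m_r r n)) ^ ((r + 1 choose 2) - 1)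
    * ((2 * real r + 2) / (real r + 2)) * ln (real n)"
  have "0 \<le> Mb * t" using t assms unfolding Mb_def by simp
  then have "Mb * t / (1 - t) \<le> Mb * t / (1 - \<tau>)"
    using t \<open>p \<le> \<tau>\<close> \<tau> by (intro divide_left_mono) auto
  also have "Mb * t \<le> X"
    using transversals_times_prob_le[OF r n(1) \<open>0 \<le> \<gamma>\<close> p(1), of "(1 + \<eta>) * real m / \<beta>"] p(2) pos assms
    unfolding Mb_def t_def X_def \<beta>_def c0_def by (simp add: field_simps)
  finally have exponent: "Mb * t / (1 - t) \<le> X / (1 - \<tau>)" using \<tau> by (simp add: divide_right_mono)
  have "binomial_lower_tail N p (m - 1) \<le> exp (- (\<eta> - ln (1 + \<eta>)) * real (m - 1))"
    using assms Np p(1) \<open>p \<le> \<tau>\<close> by (intro binomial_lower_tail_le_exp) auto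
  also have "\<dots> \<le> exp (- (\<eta> - ln (1 + \<eta>)) * (real n - 1))"
    using ln_add_one_self_less_self[OF \<open>0 < \<eta>\<close>] n by simp
  moreover have "exp (- Mb * t / (1 - t)) - binomial_lower_tail N p (m - 1)
      \<le> real (card (G_plus n r V m e \<inter> F_free n m r)) / real (N choose (m - 1))"
    using free_fraction_ge[OF P e _ \<open>m - 1 \<le> N\<close>[unfolded N_def] p(1) _ \<open>0 \<le> \<gamma>\<close> r] n t \<open>p \<le> \<tau>\<close> \<tau>
    unfolding N_def t_def Mb_def by simp
  moreover have "exp (- Mb * t / (1 - t)) = exp (- (Mb * t / (1 - t)))" by simp
  ultimately show ?thesis using exponent unfolding N_def X_def by (smt (verit) exp_mono)
qed

lemma r_mult_gamma_le:
  assumes "2 \<le> r" "0 \<le> \<gamma>" "(1 + \<gamma> * real r) ^ (r - 1) \<le> 1 + \<epsilon> / 4"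
  shows "real r * \<gamma> \<le> \<epsilon> / 4"
proof -
  have "(1 + \<gamma> * real r) ^ 1 \<le> (1 + \<gamma> * real r) ^ (r - 1)"
    using assms by (intro power_increasing) auto
  then show ?thesis using assms(3) by (simp add: mult.commute)
qed

lemma free_fraction_ge_exp_eps:
  assumes r: "2 \<le> r" and "0 < \<gamma>" "0 < \<eta>" "\<epsilon> < 1"
    and H2: "(1 + \<gamma> * real r) ^ (r - 1) \<le> 1 + \<epsilon> / 4"
    and P: "in_Pnr n r \<gamma> V" and e: "e \<in> partite_compl n r V"
    and n: "2 \<le> n" "n \<le> m" "real m \<le> m_r r n" and \<tau>: "\<tau> < 1"
    and small: "(1 + \<eta>) / ((1 - real r * \<gamma>) * ((real r - 1) / (2 * real r))) * (m_r r n / real n ^ 2) \<le> \<tau>"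
    and z: "(1 + \<eta>) * real m / ((1 - real r * \<gamma>) * m_r r n) \<le> z"
  shows "exp (- ((1 + \<epsilon> / 4) * z ^ ((r + 1 choose 2) - 1) * ((2 * real r + 2) / (real r + 2))
             * ln (real n) / (1 - \<tau>)))
         - exp (- (\<eta> - ln (1 + \<eta>)) * (real n - 1))
       \<le> real (card (G_plus n r V m e \<inter> F_free n m r)) / real (card (partite_graph n r V) choose (m - 1))"
proof -
  define \<beta> where "\<beta> = 1 - real r * \<gamma>"
  define c0 where "c0 = (real r - 1) / (2 * real r)"
  define y where "y = (1 + \<eta>) * real m / (\<beta> * m_r r n)"
  define s where "s = (r + 1 choose 2) - 1"
  define A where "A = (2 * real r + 2) / (real r + 2)"
  have "real r * \<gamma> \<le> \<epsilon> / 4" using r_mult_gamma_le[OF r _ H2] \<open>0 < \<gamma>\<close> by simp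
  then have \<beta>: "0 < \<beta>" using \<open>\<epsilon> < 1\<close> unfolding \<beta>_def by simp
  have pos: "0 < c0" "0 < A" "0 < m_r r n" "0 \<le> ln (real n)"
    using r n m_r_pos[OF r n(1)] unfolding c0_def A_def by auto
  have "(1 + \<eta>) * real m / (\<beta> * c0 * real n ^ 2) \<le> (1 + \<eta>) / (\<beta> * c0) * (m_r r n / real n ^ 2)"
    using \<beta> pos n(3) \<open>0 < \<eta>\<close> by (simp add: divide_right_mono mult_left_mono)
  also have "\<dots> \<le> \<tau>" using small unfolding \<beta>_def c0_def by (simp add: ac_simps)
  finally have small_m: "(1 + \<eta>) * real m / (\<beta> * c0 * real n ^ 2) \<le> \<tau>" .
  have "1 \<le> (1 + \<gamma> * real r) ^ (r - 1)" using \<open>0 < \<gamma>\<close> by (simp add: one_le_power)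
  then have "(1 + \<gamma> * real r) ^ (r - 1) * y ^ s * A * ln (real n) / (1 - \<tau>)
      \<le> (1 + \<epsilon> / 4) * z ^ s * A * ln (real n) / (1 - \<tau>)"
    using H2 z \<beta> pos \<tau> \<open>0 < \<eta>\<close> unfolding y_def \<beta>_def
    by (intro divide_right_mono mult_right_mono mult_mono power_mono) auto
  then have "exp (- ((1 + \<epsilon> / 4) * z ^ s * A * ln (real n) / (1 - \<tau>)))
      \<le> exp (- ((1 + \<gamma> * real r) ^ (r - 1) * y ^ s * A * ln (real n) / (1 - \<tau>)))"
    by simp
  moreover have "exp (- ((1 + \<gamma> * real r) ^ (r - 1) * y ^ s * A * ln (real n) / (1 - \<tau>)))
        - exp (- (\<eta> - ln (1 + \<eta>)) * (real n - 1))
      \<le> real (card (G_plus n r V m e \<inter> F_free n m r)) / real (card (partite_graph n r V) choose (m - 1))"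
    using free_fraction_ge_exp[OF r \<open>0 < \<eta>\<close> _ _ P e n(1,2) \<tau> small_m[unfolded \<beta>_def c0_def]] \<open>0 < \<gamma>\<close> \<beta>
    unfolding y_def \<beta>_def s_def A_def by simp
  ultimately show ?thesis unfolding s_def A_def by linarith
qed

lemma ratio_le_one_minus_half_eps:
  fixes \<epsilon> \<eta> \<beta> x M :: real
  assumes "\<epsilon> < 1" "0 < \<eta>" "0 < \<beta>" "\<beta> \<le> 1" "0 < M" "x \<le> (1 - \<epsilon>) * M"
    and H1: "(1 + \<eta>) * (1 - \<epsilon>) / \<beta>^2 \<le> 1 - \<epsilon> / 2"
  shows "(1 + \<eta>) * x / (\<beta> * M) \<le> 1 - \<epsilon> / 2"
proof -
  have "(1 + \<eta>) * x \<le> (1 + \<eta>) * ((1 - \<epsilon>) * M)" using assms by (intro mult_left_mono) auto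
  then have "(1 + \<eta>) * x / (\<beta> * M) \<le> (1 + \<eta>) * ((1 - \<epsilon>) * M) / (\<beta> * M)"
    using assms by (intro divide_right_mono) auto
  also have "\<dots> = (1 + \<eta>) * (1 - \<epsilon>) / \<beta>" using assms by simp
  also have "\<dots> \<le> (1 + \<eta>) * (1 - \<epsilon>) / \<beta>^2"
    using assms by (simp add: power2_eq_square divide_simps)
  finally show ?thesis using H1 by linarith
qed

lemma power_div_mult_le:
  fixes L q :: real
  assumes "1 \<le> L" "0 \<le> q" "2 \<le> s"
  shows "(q / L) ^ s * L \<le> q ^ s / L"
proof -
  have "L ^ 2 \<le> L ^ s" using assms by (intro power_increasing) auto
  then have "q ^ s / L ^ s \<le> q ^ s / L ^ 2" using assms by (intro divide_left_mono) auto
  then show ?thesis using assms by (simp add: power_divide power2_eq_square field_simps)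
qed

lemma mult_mono_lower_bound:
  fixes b c x y :: real
  assumes "0 \<le> c" "c \<le> x" "b \<le> y" "0 \<le> y"
  shows "c * b \<le> x * y"
proof (cases "0 \<le> b")
  case True
  then show ?thesis using assms by (intro mult_mono) auto
next
  case False
  then have "c * b \<le> 0" using assms by (simp add: mult_nonneg_nonpos)
  moreover have "0 \<le> x * y" using assms by simp
  ultimately show ?thesis by linarith
qed

lemma free_ratio_ge_min:
  assumes r: "2 \<le> r" and \<epsilon>: "0 < \<epsilon>" "\<epsilon> < 1" and "0 < \<gamma>" "0 < \<eta>"
    and H1: "(1 + \<eta>) * (1 - \<epsilon>) / (1 - real r * \<gamma>)^2 \<le> 1 - \<epsilon> / 2"
    and H2: "(1 + \<gamma> * real r) ^ (r - 1) \<le> 1 + \<epsilon> / 4"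
    and P: "in_Pnr n r \<gamma> V" and e: "e \<in> partite_compl n r V"
    and n: "3 \<le> n" "n \<le> m" "real m \<le> (1 - \<epsilon>) * m_r r n"
    and \<tau>: "\<tau> < 1"
    and small: "(1 + \<eta>) / ((1 - real r * \<gamma>) * ((real r - 1) / (2 * real r))) * (m_r r n / real n ^ 2) \<le> \<tau>"
  defines "s \<equiv> (r + 1 choose 2) - 1" and "A \<equiv> (2 * real r + 2) / (real r + 2)"
    and "\<delta> \<equiv> \<eta> - ln (1 + \<eta>)"
  shows "min (m_r r n / ln (real n)
               * (real n powr (- ((1 + \<epsilon> / 4) * (1 - \<epsilon> / 2) ^ s * A / (1 - \<tau>))) - exp (- \<delta> * (real n - 1))))
             (real n * (exp (- ((1 + \<epsilon> / 4) * ((1 + \<eta>) / (1 - real r * \<gamma>)) ^ s * A / (1 - \<tau>)) / ln (real n))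
               - exp (- \<delta> * (real n - 1))))
       \<le> real m * real (card (G_plus n r V m e \<inter> F_free n m r)) / real (card (partite_graph n r V) choose (m - 1))"
proof -
  define \<beta> where "\<beta> = 1 - real r * \<gamma>"
  define L where "L = ln (real n)"
  define F where "F = real (card (G_plus n r V m e \<inter> F_free n m r)) / real (card (partite_graph n r V) choose (m - 1))"
  have nn: "real n \<ge> 3" using n by simp
  have "real r * \<gamma> \<le> \<epsilon> / 4" using r_mult_gamma_le[OF r _ H2] \<open>0 < \<gamma>\<close> by simp
  then have \<beta>: "0 < \<beta>" "\<beta> \<le> 1" using \<epsilon> \<open>0 < \<gamma>\<close> unfolding \<beta>_def by auto
  have "exp 1 \<le> real n" using exp_le nn by linarith
  then have L: "1 \<le> L" unfolding L_def using nn by (simp add: ln_ge_iff)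
  have mr: "0 < m_r r n" using m_r_pos[OF r] n by simp
  have A: "0 < A" unfolding A_def by simp
  have "real m \<le> m_r r n" using n(3) \<epsilon> mr mult_left_le_one_le[of "m_r r n" "1 - \<epsilon>"] by linarith
  note bound = free_fraction_ge_exp_eps[OF r \<open>0 < \<gamma>\<close> \<open>0 < \<eta>\<close> \<open>\<epsilon> < 1\<close> H2 P e _ n(2) this \<tau> small]
  have F: "0 \<le> F" unfolding F_def by simp
  have "(1 + \<eta>) * real m / (\<beta> * m_r r n) \<le> 1 - \<epsilon> / 2"
    using ratio_le_one_minus_half_eps[of \<epsilon> \<eta> \<beta> "m_r r n" "real m"] assms \<beta> mr unfolding \<beta>_def by simp
  then have "exp (- ((1 + \<epsilon> / 4) * (1 - \<epsilon> / 2) ^ s * A * L / (1 - \<tau>))) - exp (- \<delta> * (real n - 1)) \<le> F"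
    using bound n unfolding \<beta>_def s_def A_def \<delta>_def L_def F_def by simp
  moreover have "exp (- ((1 + \<epsilon> / 4) * (1 - \<epsilon> / 2) ^ s * A * L / (1 - \<tau>)))
      = real n powr (- ((1 + \<epsilon> / 4) * (1 - \<epsilon> / 2) ^ s * A / (1 - \<tau>)))"
    using nn unfolding powr_def L_def by simp
  ultimately have bound_large:
    "real n powr (- ((1 + \<epsilon> / 4) * (1 - \<epsilon> / 2) ^ s * A / (1 - \<tau>))) - exp (- \<delta> * (real n - 1)) \<le> F"
    by simp
  have bound_small:
    "exp (- ((1 + \<epsilon> / 4) * ((1 + \<eta>) / \<beta>) ^ s * A / (1 - \<tau>)) / L) - exp (- \<delta> * (real n - 1)) \<le> F"
    if "real m < m_r r n / L"
  proof -
    define q where "q = (1 + \<eta>) / \<beta>"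
    have q: "0 < q" unfolding q_def using \<beta> \<open>0 < \<eta>\<close> by simp
    have "(1 + \<eta>) * real m / (\<beta> * m_r r n) \<le> (1 + \<eta>) * (m_r r n / L) / (\<beta> * m_r r n)"
      using that \<beta> mr \<open>0 < \<eta>\<close> by (intro divide_right_mono mult_left_mono) auto
    also have "\<dots> = q / L" unfolding q_def using mr L by simp
    finally have bound_q: "exp (- ((1 + \<epsilon> / 4) * (q / L) ^ s * A * L / (1 - \<tau>))) - exp (- \<delta> * (real n - 1)) \<le> F"
      using bound n unfolding \<beta>_def s_def A_def \<delta>_def L_def F_def by simp
    have "(q / L) ^ s * L \<le> q ^ s / L"
      using power_div_mult_le[OF L _ two_le_choose_two_minus_one[OF r]] q unfolding s_def by simp
    then have "(1 + \<epsilon> / 4) * A / (1 - \<tau>) * ((q / L) ^ s * L) \<le> (1 + \<epsilon> / 4) * A / (1 - \<tau>) * (q ^ s / L)"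
      using \<epsilon> A \<tau> by (intro mult_left_mono) auto
    then have "exp (- ((1 + \<epsilon> / 4) * q ^ s * A / (1 - \<tau>)) / L) \<le> exp (- ((1 + \<epsilon> / 4) * (q / L) ^ s * A * L / (1 - \<tau>)))"
      by (simp add: field_simps)
    then show ?thesis using bound_q unfolding q_def by linarith
  qed
  consider "m_r r n / L \<le> real m" | "real m < m_r r n / L" by linarith
  then have "min (m_r r n / L
               * (real n powr (- ((1 + \<epsilon> / 4) * (1 - \<epsilon> / 2) ^ s * A / (1 - \<tau>))) - exp (- \<delta> * (real n - 1))))
             (real n * (exp (- ((1 + \<epsilon> / 4) * ((1 + \<eta>) / \<beta>) ^ s * A / (1 - \<tau>)) / L)
               - exp (- \<delta> * (real n - 1))))
       \<le> real m * F"
  proof cases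
    case 1
    then show ?thesis using bound_large F mr L by (intro min.coboundedI1 mult_mono_lower_bound) auto
  next
    case 2
    then show ?thesis using bound_small F n(2) by (intro min.coboundedI2 mult_mono_lower_bound) auto
  qed
  then show ?thesis unfolding L_def \<beta>_def F_def by simp
qed

section \<open>Asymptotics\<close>

lemma filterlim_at_top_min:
  fixes f g :: "'a \<Rightarrow> real"
  assumes "filterlim f at_top F" "filterlim g at_top F"
  shows "filterlim (\<lambda>x. min (f x) (g x)) at_top F"
  unfolding filterlim_at_top
proof
  fix Z
  have "\<forall>\<^sub>F x in F. Z \<le> f x" "\<forall>\<^sub>F x in F. Z \<le> g x" using assms unfolding filterlim_at_top by auto
  then show "\<forall>\<^sub>F x in F. Z \<le> min (f x) (g x)" by eventually_elim simp
qed

lemma powr_ln_over_square_tendsto_0: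
  "0 < a \<Longrightarrow> a < 2 \<Longrightarrow> ((\<lambda>n::nat. c * real n powr a * ln (real n) powr d / real n ^ 2) \<longlongrightarrow> 0) sequentially"
  by real_asymp

lemma powr_ln_times_gap_at_top:
  "0 < c \<Longrightarrow> 0 < b \<Longrightarrow> b < a \<Longrightarrow> 0 < \<delta> \<Longrightarrow>
    filterlim (\<lambda>n::nat. c * real n powr a * ln (real n) powr d / ln (real n)
      * (real n powr (- b) - exp (- \<delta> * (real n - 1)))) at_top sequentially"
  by real_asymp

lemma linear_times_gap_at_top:
  "0 < \<delta> \<Longrightarrow>
    filterlim (\<lambda>n::nat. real n * (exp (- K / ln (real n)) - exp (- \<delta> * (real n - 1)))) at_top sequentially"
  by real_asymp

lemma m_r_over_square_eventually_le:
  assumes "2 \<le> r" "0 < \<tau>"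
  shows "\<forall>\<^sub>F n in sequentially. C * (m_r r n / real n ^ 2) \<le> \<tau>"
proof -
  have "(2 * real r + 2) / (real r + 2) < 2" by (simp add: field_simps)
  then have "((\<lambda>n. C * (m_r r n / real n ^ 2)) \<longlongrightarrow> 0) sequentially"
    unfolding m_r_eq[OF assms(1)] by (intro tendsto_mult_right_zero powr_ln_over_square_tendsto_0) auto
  then show ?thesis by (rule eventually_mono[OF order_tendstoD(2)[OF _ assms(2)]]) simp
qed

lemma min_lower_bounds_at_top:
  assumes "2 \<le> r" "0 < b" "b < (2 * real r + 2) / (real r + 2)" "0 < \<eta>"
  shows "filterlim (\<lambda>n. min
      (m_r r n / ln (real n) * (real n powr (- b) - exp (- (\<eta> - ln (1 + \<eta>)) * (real n - 1))))
      (real n * (exp (- K / ln (real n)) - exp (- (\<eta> - ln (1 + \<eta>)) * (real n - 1))))) at_top sequentially"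
  using assms theta_pos[OF assms(1)] ln_add_one_self_less_self[OF assms(4)] unfolding m_r_eq[OF assms(1)]
  by (intro filterlim_at_top_min powr_ln_times_gap_at_top linear_times_gap_at_top) auto

lemma one_plus_times_power_lt_1:
  fixes \<epsilon> :: real
  assumes "0 < \<epsilon>" "\<epsilon> < 1" "1 \<le> s"
  shows "(1 + \<epsilon> / 4) * (1 - \<epsilon> / 2) ^ s < 1"
proof -
  have "(1 - \<epsilon> / 2) ^ s \<le> (1 - \<epsilon> / 2) ^ 1" using assms by (intro power_decreasing) auto
  then have "(1 + \<epsilon> / 4) * (1 - \<epsilon> / 2) ^ s \<le> (1 + \<epsilon> / 4) * (1 - \<epsilon> / 2)"
    using assms by (intro mult_left_mono) auto
  also have "\<dots> = 1 - \<epsilon> / 4 - \<epsilon> * \<epsilon> / 8" by (simp add: algebra_simps)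
  finally show ?thesis using assms mult_pos_pos[of \<epsilon> \<epsilon>] by linarith
qed

theorem lemma5p3:
  fixes r :: nat and \<epsilon> \<gamma> \<eta> :: real
    and Pi :: "nat \<Rightarrow> (nat \<Rightarrow> nat set)" and e :: "nat \<Rightarrow> nat set" and m :: "nat \<Rightarrow> nat"
  assumes "r \<ge> 2" and "0 < \<epsilon>" and "\<epsilon> < 1" and "\<gamma> > 0" and "\<eta> > 0"
    and "(1 + \<eta>) * (1 - \<epsilon>) / (1 - real r * \<gamma>)^2 \<le> 1 - \<epsilon> / 2"
    and "(1 + \<gamma> * real r) ^ (r - 1) \<le> 1 + \<epsilon> / 4"
    and "\<forall>\<^sub>F n in sequentially. in_Pnr n r \<gamma> (Pi n) \<and> e n \<in> partite_compl n r (Pi n) \<and>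
           n \<le> m n \<and> real (m n) \<le> (1 - \<epsilon>) * m_r r n"
  shows "filterlim (\<lambda>n. real (m n) * real (card (G_plus n r (Pi n) (m n) (e n) \<inter> F_free n (m n) r))
             / real (card (partite_graph n r (Pi n)) choose (m n - 1))) at_top sequentially"
proof -
  define s where "s = (r + 1 choose 2) - 1"
  define A where "A = (2 * real r + 2) / (real r + 2)"
  define \<rho> where "\<rho> = (1 + \<epsilon> / 4) * (1 - \<epsilon> / 2) ^ s"
  define \<tau> where "\<tau> = (1 - \<rho>) / 2"
  have "1 \<le> s" using two_le_choose_two_minus_one[OF assms(1)] unfolding s_def by simp
  then have "0 < \<rho>" "\<rho> < 1" using assms one_plus_times_power_lt_1 unfolding \<rho>_def by auto
  moreover have "0 < A" unfolding A_def by simp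
  ultimately have \<tau>: "0 < \<tau>" "\<tau> < 1" "0 < \<rho> * A / (1 - \<tau>)" "\<rho> * A / (1 - \<tau>) < A"
    unfolding \<tau>_def by (auto simp: field_simps)
  note lower_bounds_at_top = min_lower_bounds_at_top[OF assms(1) \<tau>(3,4)[unfolded A_def] assms(5),
    where K = "(1 + \<epsilon> / 4) * ((1 + \<eta>) / (1 - real r * \<gamma>)) ^ s * A / (1 - \<tau>)"]
  show ?thesis
  proof (rule filterlim_at_top_mono[OF lower_bounds_at_top], goal_cases)
    case 1
    note small = m_r_over_square_eventually_le[OF assms(1) \<tau>(1),
      where C = "(1 + \<eta>) / ((1 - real r * \<gamma>) * ((real r - 1) / (2 * real r)))"]
    from assms(8) small eventually_ge_at_top[of 3] show ?case
    proof eventually_elim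
      case (elim n)
      then show ?case
        using free_ratio_ge_min[OF assms(1-7), of n "Pi n" "e n" "m n" \<tau>] \<tau>
        unfolding \<rho>_def s_def A_def by auto
    qed
  qed
qed

end
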